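(* Let $E=(C,V)$ be an approval election. Then $\mathrm{cntr\text{-}agr}(E)=1$ if and only if $E$ is an identity election, and $\mathrm{cntr\text{-}agr}(E)=0$ if and only if either $\mathrm{cen}(E)$ contains a vote approving all candidates or $\mathrm{cen}(E)$ contains a vote disapproving all candidates.
   Context: An (approval) election is a pair $E=(C,V)$ with candidate set $C=\{c_1,\dots,c_m\}$ and a collection of voters $V=(v_1,\dots,v_n)$; each vote is a binary vector in $\{0,1\}^m$ ($v_i[j]=1$ iff voter $v_i$ approves $c_j$). $A(v)$ is the set of candidates approved by vote $v$ and $A(c)$ the set of voters approving candidate $c$. An identity election is one in which all votes are identical. The Hamming distance between votes is $\mathrm{ham}(u,v)=\sum_{j=1}^m|u[j]-v[j]|$. Let $\mathrm{avl}(E)=\frac{1}{|V|}\sum_{v\in V}|A(v)|$ and $\mathrm{rev\text{-}avl}(E)=\frac{1}{|V|}\sum_{v\in V}(|C|-|A(v)|)$ (the average number of disapproved candidates). A vote $u\in\{0,1\}^m$ is central for $E$ if for each candidate $c_j$, $u$ agrees regarding $c_j$ (i.e. $u[j]=v_i[j]$) with at least half of the voters; $\mathrm{cen}(E)$ denotes the set of all central votes. Central Agreement is $\mathrm{cntr\text{-}agr}(E)=1-\frac{\sum_{v_i\in V}\mathrm{ham}(v_i,u)}{|V|\cdot\min(\mathrm{avl}(E),\mathrm{rev\text{-}avl}(E))}$ for an arbitrary $u\in\mathrm{cen}(E)$ (the value does not depend on the choice of $u$). *)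

theory Defs
  imports Main Complex_Main
begin

text \<open>Candidates are c_0,...,c_{m-1} (indices j < m). A vote is a bool list of
  length m (True = approval). The voters form a list V (a collection, duplicates allowed).\<close>

definition wf_election :: "nat \<Rightarrow> bool list list \<Rightarrow> bool" where
  "wf_election m V \<longleftrightarrow> V \<noteq> [] \<and> (\<forall>v\<in>set V. length v = m)"

definition ham :: "nat \<Rightarrow> bool list \<Rightarrow> bool list \<Rightarrow> nat" where
  "ham m u v = card {j. j < m \<and> u ! j \<noteq> v ! j}"

definition num_appr :: "nat \<Rightarrow> bool list \<Rightarrow> nat" where
  "num_appr m v = card {j. j < m \<and> v ! j}"

definition avl :: "nat \<Rightarrow> bool list list \<Rightarrow> real" where
  "avl m V = (\<Sum>v\<leftarrow>V. real (num_appr m v)) / real (length V)"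

definition rev_avl :: "nat \<Rightarrow> bool list list \<Rightarrow> real" where
  "rev_avl m V = (\<Sum>v\<leftarrow>V. real m - real (num_appr m v)) / real (length V)"

definition is_identity :: "bool list list \<Rightarrow> bool" where
  "is_identity V \<longleftrightarrow> (\<forall>v\<in>set V. \<forall>w\<in>set V. v = w)"

definition cen :: "nat \<Rightarrow> bool list list \<Rightarrow> bool list set" where
  "cen m V = {u. length u = m \<and>
     (\<forall>j<m. 2 * card {i. i < length V \<and> V ! i ! j = u ! j} \<ge> length V)}"

definition cntr_agr :: "nat \<Rightarrow> bool list list \<Rightarrow> real" where
  "cntr_agr m V = (let u = (SOME u. u \<in> cen m V) in
     1 - (\<Sum>v\<leftarrow>V. real (ham m v u)) / (real (length V) * min (avl m V) (rev_avl m V)))"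

end

theory Submission
  imports Defs
begin

text \<open>Let a_j and b_j be the numbers of voters approving and disapproving candidate j.
  A central vote disagrees on candidate j with exactly min a_j b_j voters, while the
  denominator of central agreement is min (\<Sum>a_j) (\<Sum>b_j). The numerator vanishes iff
  every candidate is decided unanimously, i.e. iff all votes coincide; it equals the
  denominator iff a_j \<le> b_j for all j or b_j \<le> a_j for all j, which says precisely that
  the all-disapproving resp. the all-approving vote is central.\<close>

lemma sum_min_eq_min_sum_iff:
  fixes f g :: "'i \<Rightarrow> 'a :: {ordered_cancel_comm_monoid_add, linorder}"
  assumes "finite I"
  shows "(\<Sum>i\<in>I. min (f i) (g i)) = min (sum f I) (sum g I)
         \<longleftrightarrow> (\<forall>i\<in>I. f i \<le> g i) \<or> (\<forall>i\<in>I. g i \<le> f i)"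
proof
  assume eq: "(\<Sum>i\<in>I. min (f i) (g i)) = min (sum f I) (sum g I)"
  show "(\<forall>i\<in>I. f i \<le> g i) \<or> (\<forall>i\<in>I. g i \<le> f i)"
  proof (cases "sum f I \<le> sum g I")
    case True
    then have "(\<Sum>i\<in>I. min (f i) (g i)) = sum f I" using eq by simp
    then have "\<forall>i\<in>I. min (f i) (g i) = f i"
      using sum_mono_inv[of "\<lambda>i. min (f i) (g i)" I f] assms by auto
    then show ?thesis by (metis min.cobounded2)
  next
    case False
    then have "(\<Sum>i\<in>I. min (f i) (g i)) = sum g I" using eq by simp
    then have "\<forall>i\<in>I. min (f i) (g i) = g i"
      using sum_mono_inv[of "\<lambda>i. min (f i) (g i)" I g] assms by auto
    then show ?thesis by (metis min.cobounded1)
  qed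
next
  assume "(\<forall>i\<in>I. f i \<le> g i) \<or> (\<forall>i\<in>I. g i \<le> f i)"
  then show "(\<Sum>i\<in>I. min (f i) (g i)) = min (sum f I) (sum g I)"
  proof
    assume "\<forall>i\<in>I. f i \<le> g i"
    then show ?thesis by (simp add: sum_mono min_absorb1)
  next
    assume "\<forall>i\<in>I. g i \<le> f i"
    then show ?thesis by (simp add: sum_mono min_absorb2)
  qed
qed

lemma sum_list_card_eq_sum_length_filter:
  "(\<Sum>v\<leftarrow>V. card {j. j < (m::nat) \<and> P v j}) = (\<Sum>j<m. length (filter (\<lambda>v. P v j) V))"
proof (induction V)
  case (Cons v V)
  have "(\<Sum>j<m. length (filter (\<lambda>w. P w j) (v # V)))
      = (\<Sum>j<m. of_bool (P v j) + length (filter (\<lambda>w. P w j) V))"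
    by (intro sum.cong) auto
  also have "\<dots> = card {j. j < m \<and> P v j} + (\<Sum>j<m. length (filter (\<lambda>w. P w j) V))"
    by (simp add: sum.distrib Collect_conj_eq lessThan_def)
  finally show ?case using Cons.IH by simp
qed simp

lemma sum_list_map_of_nat: "(\<Sum>x\<leftarrow>xs. of_nat (f x)) = of_nat (\<Sum>x\<leftarrow>xs. f x)"
  by (induction xs) simp_all

definition tally :: "bool list list \<Rightarrow> nat \<Rightarrow> bool \<Rightarrow> nat" where
  "tally V j b = length (filter (\<lambda>v. v ! j = b) V)"

lemma tally_eq_card: "tally V j b = card {i. i < length V \<and> V ! i ! j = b}"
  unfolding tally_def by (rule length_filter_conv_card)

lemma tally_add_tally_Not: "tally V j b + tally V j (\<not> b) = length V"
  unfolding tally_def using sum_length_filter_compl[of "\<lambda>v. v ! j = b" V] by simp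

lemma tally_eq_0_iff: "tally V j b = 0 \<longleftrightarrow> (\<forall>v\<in>set V. v ! j \<noteq> b)"
  unfolding tally_def by (simp add: filter_empty_conv)

lemma sum_list_num_appr: "(\<Sum>v\<leftarrow>V. num_appr m v) = (\<Sum>j<m. tally V j True)"
  unfolding num_appr_def tally_def by (simp add: sum_list_card_eq_sum_length_filter)

lemma sum_list_num_disappr:
  "(\<Sum>v\<leftarrow>V. real m - real (num_appr m v)) = real (\<Sum>j<m. tally V j False)"
proof -
  have "real m - real (num_appr m v) = real (card {j. j < m \<and> \<not> v ! j})" for v
  proof -
    have "{j. j < m \<and> v ! j} \<union> {j. j < m \<and> \<not> v ! j} = {..<m}" by auto
    then have "num_appr m v + card {j. j < m \<and> \<not> v ! j} = m"
      unfolding num_appr_def by (subst card_Un_disjoint[symmetric]) auto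
    then show ?thesis by linarith
  qed
  then have "(\<Sum>v\<leftarrow>V. real m - real (num_appr m v)) = (\<Sum>v\<leftarrow>V. real (card {j. j < m \<and> \<not> v ! j}))"
    by simp
  also have "\<dots> = real (\<Sum>v\<leftarrow>V. card {j. j < m \<and> \<not> v ! j})"
    by (rule sum_list_map_of_nat)
  also have "\<dots> = real (\<Sum>j<m. tally V j False)"
    unfolding tally_def by (simp add: sum_list_card_eq_sum_length_filter)
  finally show ?thesis .
qed

lemma sum_list_ham: "(\<Sum>v\<leftarrow>V. ham m v u) = (\<Sum>j<m. tally V j (\<not> u ! j))"
  unfolding ham_def tally_def by (simp add: sum_list_card_eq_sum_length_filter)

lemma mem_cen_iff:
  "u \<in> cen m V \<longleftrightarrow> length u = m \<and> (\<forall>j<m. tally V j (\<not> u ! j) \<le> tally V j (u ! j))"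
proof -
  have "length V \<le> 2 * tally V j (u ! j) \<longleftrightarrow> tally V j (\<not> u ! j) \<le> tally V j (u ! j)" for j
    using tally_add_tally_Not[of V j "u ! j"] by linarith
  then show ?thesis unfolding cen_def by (simp add: tally_eq_card[symmetric])
qed

lemma tally_Not_central:
  assumes "u \<in> cen m V" and "j < m"
  shows "tally V j (\<not> u ! j) = min (tally V j True) (tally V j False)"
  using assms unfolding mem_cen_iff by (cases "u ! j") auto

lemma majority_vote_mem_cen:
  "map (\<lambda>j. tally V j False \<le> tally V j True) [0..<m] \<in> cen m V"
proof -
  have "tally V j (\<not> b) \<le> tally V j b" if "b = (tally V j False \<le> tally V j True)" for j b
    using that by (cases b) auto
  then show ?thesis by (simp add: mem_cen_iff)
qed

lemma ex_cen_all_approved_iff: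
  "(\<exists>u\<in>cen m V. \<forall>j<m. u ! j) \<longleftrightarrow> (\<forall>j<m. tally V j False \<le> tally V j True)"
proof
  assume "\<exists>u\<in>cen m V. \<forall>j<m. u ! j"
  then show "\<forall>j<m. tally V j False \<le> tally V j True" by (auto simp: mem_cen_iff)
next
  assume "\<forall>j<m. tally V j False \<le> tally V j True"
  then have "replicate m True \<in> cen m V" unfolding mem_cen_iff by simp
  then show "\<exists>u\<in>cen m V. \<forall>j<m. u ! j" by force
qed

lemma ex_cen_all_disapproved_iff:
  "(\<exists>u\<in>cen m V. \<forall>j<m. \<not> u ! j) \<longleftrightarrow> (\<forall>j<m. tally V j True \<le> tally V j False)"
proof
  assume "\<exists>u\<in>cen m V. \<forall>j<m. \<not> u ! j"
  then show "\<forall>j<m. tally V j True \<le> tally V j False" by (auto simp: mem_cen_iff)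
next
  assume "\<forall>j<m. tally V j True \<le> tally V j False"
  then have "replicate m False \<in> cen m V" unfolding mem_cen_iff by simp
  then show "\<exists>u\<in>cen m V. \<forall>j<m. \<not> u ! j" by force
qed

lemma min_tally_eq_0_iff:
  "min (tally V j True) (tally V j False) = 0 \<longleftrightarrow> (\<forall>v\<in>set V. \<forall>w\<in>set V. v ! j = w ! j)"
proof -
  have "min (tally V j True) (tally V j False) = 0 \<longleftrightarrow> tally V j True = 0 \<or> tally V j False = 0"
    by linarith
  also have "\<dots> \<longleftrightarrow> (\<forall>v\<in>set V. \<not> v ! j) \<or> (\<forall>v\<in>set V. v ! j)"
    by (simp add: tally_eq_0_iff)
  also have "\<dots> \<longleftrightarrow> (\<forall>v\<in>set V. \<forall>w\<in>set V. v ! j = w ! j)"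
    by (metis (full_types))
  finally show ?thesis .
qed

lemma is_identity_iff_nth_agree:
  assumes "\<forall>v\<in>set V. length v = m"
  shows "is_identity V \<longleftrightarrow> (\<forall>j<m. \<forall>v\<in>set V. \<forall>w\<in>set V. v ! j = w ! j)"
proof
  assume "is_identity V"
  show "\<forall>j<m. \<forall>v\<in>set V. \<forall>w\<in>set V. v ! j = w ! j"
  proof (intro allI impI ballI)
    fix j v w assume "v \<in> set V" "w \<in> set V"
    with \<open>is_identity V\<close> have "v = w" unfolding is_identity_def by blast
    then show "v ! j = w ! j" by simp
  qed
next
  assume agree: "\<forall>j<m. \<forall>v\<in>set V. \<forall>w\<in>set V. v ! j = w ! j"
  show "is_identity V" unfolding is_identity_def
  proof (intro ballI)
    fix v w assume v: "v \<in> set V" and w: "w \<in> set V"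
    show "v = w"
    proof (rule nth_equalityI)
      show "length v = length w" using assms v w by simp
      fix j assume "j < length v"
      with assms v have "j < m" by simp
      with agree v w show "v ! j = w ! j" by blast
    qed
  qed
qed

lemma length_mult_min_avl_rev_avl:
  assumes "V \<noteq> []"
  shows "real (length V) * min (avl m V) (rev_avl m V)
       = real (min (\<Sum>j<m. tally V j True) (\<Sum>j<m. tally V j False))"
proof -
  define A where "A = (\<Sum>j<m. tally V j True)"
  define B where "B = (\<Sum>j<m. tally V j False)"
  have "avl m V = real A / real (length V)"
    unfolding avl_def sum_list_map_of_nat sum_list_num_appr A_def ..
  moreover have "rev_avl m V = real B / real (length V)"
    unfolding rev_avl_def sum_list_num_disappr B_def ..
  moreover have "min (real A / real (length V)) (real B / real (length V))
      = min (real A) (real B) / real (length V)"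
    by (simp add: min_divide_distrib_right)
  ultimately show ?thesis
    unfolding A_def[symmetric] B_def[symmetric] using assms by (simp add: of_nat_min)
qed

lemma cntr_agr_eq:
  assumes "V \<noteq> []"
  shows "cntr_agr m V = 1 - real (\<Sum>j<m. min (tally V j True) (tally V j False))
                          / real (min (\<Sum>j<m. tally V j True) (\<Sum>j<m. tally V j False))"
proof -
  define u where "u = (SOME u. u \<in> cen m V)"
  have "u \<in> cen m V"
    unfolding u_def by (rule someI) (rule majority_vote_mem_cen)
  then have "(\<Sum>v\<leftarrow>V. ham m v u) = (\<Sum>j<m. min (tally V j True) (tally V j False))"
    by (simp add: sum_list_ham tally_Not_central)
  then have "(\<Sum>v\<leftarrow>V. real (ham m v u)) = real (\<Sum>j<m. min (tally V j True) (tally V j False))"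
    unfolding sum_list_map_of_nat by (rule arg_cong)
  then show ?thesis
    unfolding cntr_agr_def Let_def u_def[symmetric] length_mult_min_avl_rev_avl[OF assms] by (rule arg_cong)
qed

theorem proposition2:
  fixes m :: nat and V :: "bool list list"
  assumes "wf_election m V"
    and "min (avl m V) (rev_avl m V) > 0"
  shows "(cntr_agr m V = 1 \<longleftrightarrow> is_identity V)
       \<and> (cntr_agr m V = 0 \<longleftrightarrow>
            ((\<exists>u\<in>cen m V. \<forall>j<m. u ! j) \<or> (\<exists>u\<in>cen m V. \<forall>j<m. \<not> u ! j)))"
proof
  define D where "D = (\<Sum>j<m. min (tally V j True) (tally V j False))"
  define M where "M = min (\<Sum>j<m. tally V j True) (\<Sum>j<m. tally V j False)"
  have "V \<noteq> []" and lengths: "\<forall>v\<in>set V. length v = m"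
    using assms(1) unfolding wf_election_def by auto
  have cntr: "cntr_agr m V = 1 - real D / real M"
    unfolding D_def M_def using \<open>V \<noteq> []\<close> by (rule cntr_agr_eq)
  have "real M = real (length V) * min (avl m V) (rev_avl m V)"
    unfolding M_def using \<open>V \<noteq> []\<close> by (rule length_mult_min_avl_rev_avl[symmetric])
  also have "\<dots> > 0"
    using assms(2) \<open>V \<noteq> []\<close> by simp
  finally have "M > 0" by simp
  have "cntr_agr m V = 1 \<longleftrightarrow> D = 0"
    using \<open>M > 0\<close> by (simp add: cntr)
  also have "\<dots> \<longleftrightarrow> (\<forall>j<m. min (tally V j True) (tally V j False) = 0)"
    by (simp add: D_def lessThan_iff Ball_def)
  also have "\<dots> \<longleftrightarrow> is_identity V"
    by (simp add: min_tally_eq_0_iff is_identity_iff_nth_agree[OF lengths])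
  finally show "cntr_agr m V = 1 \<longleftrightarrow> is_identity V" .
  have "cntr_agr m V = 0 \<longleftrightarrow> D = M"
    using \<open>M > 0\<close> by (auto simp: cntr)
  also have "\<dots> \<longleftrightarrow> (\<forall>j<m. tally V j True \<le> tally V j False) \<or> (\<forall>j<m. tally V j False \<le> tally V j True)"
    unfolding D_def M_def by (simp add: sum_min_eq_min_sum_iff lessThan_iff Ball_def)
  finally show "cntr_agr m V = 0 \<longleftrightarrow>
            ((\<exists>u\<in>cen m V. \<forall>j<m. u ! j) \<or> (\<exists>u\<in>cen m V. \<forall>j<m. \<not> u ! j))"
    by (auto simp: ex_cen_all_approved_iff ex_cen_all_disapproved_iff)
qed

end
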